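(* The determinant of $\mathbf T$ satisfies $$\det(\mathbf T)=\pm\,\beta_{-b}^{\binom{a+b-1}{a-1}}\,\beta_a^{\binom{a+b-1}{a}}$$ for some sign $\pm$; moreover exactly one bijection $\pi$ of the set of $a$-subsets of $[-b,a-1]$ to itself satisfies $\mathbf T[I,\pi(I)]\neq0$ for all $I$ whenever $\beta_{-b}\beta_a\ne0$, namely $\pi(I)=(I\cup\{a\})\setminus\{-b\}-1$ if $-b\in I$ and $\pi(I)=I-1$ if $-b\notin I$.
   Context: Let $S$ be a finite set of integers with $a:=\max S\ge 1$ and $b:=-\min S\ge 1$. Each $s\in S$ carries a weight $\omega_s$ in a field $K$ of characteristic $0$; set $\omega_s:=0$ for $s\in\mathbb Z\setminus S$, and for $s\in\mathbb Z$ put $\beta_s:=\delta_{s,0}-\omega_s$. Notation: $[m,n]:=\{i\in\mathbb Z: m\le i\le n\}$, $X+c:=\{x+c:x\in X\}$ (and $X-c:=X+(-c)$); an $n$-subset is a subset of cardinality $n$. For a finite set $I\subseteq\mathbb Z$ and $s\in\mathbb Z$, $\epsilon_s(I):=(-1)^{\#\{i\in I:\ i<s\}}$. $\mathbf T$ is the square matrix with rows and columns indexed by the $a$-subsets of $[-b,a-1]$ and entries $\mathbf T[I,J]:=\epsilon_s(I)\beta_s$ if there is an integer $s$ with $I\cup\{a\}=(J+1)\cup\{s\}$ (such $s$ is then unique), and $\mathbf T[I,J]:=0$ otherwise. *)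

theory Defs
  imports "HOL-Combinatorics.Permutations"
begin

definition beta :: "(int \<Rightarrow> 'k::field_char_0) \<Rightarrow> int \<Rightarrow> 'k" where
  "beta \<omega> s = (if s = 0 then 1 else 0) - \<omega> s"

definition asubsets :: "int \<Rightarrow> int \<Rightarrow> int set set" where
  "asubsets a b = {I. I \<subseteq> {-b..a-1} \<and> card I = nat a}"

definition shift :: "int set \<Rightarrow> int \<Rightarrow> int set" where
  "shift X c = (\<lambda>x. x + c) ` X"

definition eps :: "int \<Rightarrow> int set \<Rightarrow> 'k::field_char_0" where
  "eps s I = (-1) ^ card {i \<in> I. i < s}"

definition Tmat :: "(int \<Rightarrow> 'k::field_char_0) \<Rightarrow> int \<Rightarrow> int set \<Rightarrow> int set \<Rightarrow> 'k" where
  "Tmat \<omega> a I J =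
     (if \<exists>s. I \<union> {a} = shift J 1 \<union> {s}
      then (let s = (THE s. I \<union> {a} = shift J 1 \<union> {s}) in eps s I * beta \<omega> s)
      else 0)"

definition det_on :: "'i set \<Rightarrow> ('i \<Rightarrow> 'i \<Rightarrow> 'k::comm_ring_1) \<Rightarrow> 'k" where
  "det_on X M = (\<Sum>p \<in> {p. p permutes X}. of_int (sign p) * (\<Prod>i\<in>X. M i (p i)))"

end

theory Submission
  imports Defs
begin

text \<open>If \<open>T[I,J] \<noteq> 0\<close> with \<open>I \<union> {a} = (J + 1) \<union> {s}\<close>, comparing element sums gives
  \<open>s = \<Sum>I - \<Sum>J\<close>; hence along any permutation \<open>p\<close> with nonvanishing diagonal the values
  \<open>s\<^sub>I\<close> add up to zero. But \<open>s\<^sub>I = -b\<close> when \<open>-b \<in> I\<close> (as \<open>-b \<notin> J + 1\<close>) and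
  \<open>s\<^sub>I \<le> a\<close> otherwise, and the permutation \<open>\<pi>\<close> of the statement attains these bounds.
  Comparing with \<open>\<pi>\<close>, whose values also add up to zero, \<open>p\<close> attains every bound, i.e.
  \<open>p = \<pi>\<close>. So the Leibniz expansion of the determinant has the single term
  \<open>sign \<pi> \<cdot> \<Prod>\<^sub>I T[I, \<pi> I]\<close>, whose factors are \<open>\<beta>\<^sub>-\<^sub>b\<close> for the sets containing \<open>-b\<close>
  and \<open>\<plusminus>\<beta>\<^sub>a\<close> for the others.\<close>

lemma mem_shift [simp]: "x \<in> shift X c \<longleftrightarrow> x - c \<in> X"
  unfolding shift_def by (auto simp: image_iff) (metis diff_add_cancel)

lemma shift_shift: "shift (shift X c) d = shift X (c + d)"
  unfolding shift_def by (auto simp: image_iff add.assoc)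

lemma shift_cancel [simp]: "shift (shift X c) (- c) = X"
  unfolding shift_shift by (simp add: shift_def)

lemma finite_shift: "finite X \<Longrightarrow> finite (shift X c)"
  unfolding shift_def by simp

lemma card_shift [simp]: "card (shift X c) = card X"
  unfolding shift_def by (rule card_image) (simp add: inj_on_def)

lemma sum_shift: "finite X \<Longrightarrow> \<Sum>(shift X c) = \<Sum>X + c * int (card X)"
  unfolding shift_def by (simp add: sum.reindex inj_on_def sum.distrib mult.commute)

lemma mem_asubsets: "I \<in> asubsets a b \<longleftrightarrow> I \<subseteq> {-b..a-1} \<and> card I = nat a"
  by (simp add: asubsets_def)

lemma finite_asubsets: "finite (asubsets a b)"
  unfolding asubsets_def by (rule finite_subset[of _ "Pow {-b..a-1}"]) auto

lemma finite_mem_asubsets: "I \<in> asubsets a b \<Longrightarrow> finite I"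
  unfolding asubsets_def using finite_subset by blast

lemma Tmat_eq:
  assumes "I \<union> {a} = shift J 1 \<union> {s}" and "s \<notin> shift J 1"
  shows "Tmat \<omega> a I J = eps s I * beta \<omega> s"
proof -
  have "(THE t. I \<union> {a} = shift J 1 \<union> {t}) = s"
    by (rule the_equality) (use assms in blast)+
  with assms show ?thesis
    unfolding Tmat_def by (auto simp: Let_def)
qed

lemma removed_eq_sum_diff:
  assumes eq: "I \<union> {a} = shift J 1 \<union> {s}" and s: "s \<notin> shift J 1" and "a \<notin> I"
    and "finite J" and "int (card J) = a"
  shows "s = \<Sum>I - \<Sum>J"
proof -
  have "finite (I \<union> {a})"
    unfolding eq using finite_shift[OF \<open>finite J\<close>] by simp
  then have "finite I" by simp
  then have "\<Sum>I + a = \<Sum>(I \<union> {a})"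
    using \<open>a \<notin> I\<close> by simp
  also have "\<dots> = \<Sum>(shift J 1) + s"
    unfolding eq using s \<open>finite J\<close> by (simp add: shift_def)
  finally show ?thesis
    using sum_shift[OF \<open>finite J\<close>, of 1] \<open>int (card J) = a\<close> by simp
qed

lemma Tmat_nonzero_shape:
  assumes "a \<ge> 0" and I: "I \<in> asubsets a b" and J: "J \<in> asubsets a b"
    and nz: "Tmat \<omega> a I J \<noteq> 0"
  shows "I \<union> {a} = shift J 1 \<union> {\<Sum>I - \<Sum>J}" and "\<Sum>I - \<Sum>J \<notin> shift J 1"
proof -
  from nz obtain s where eq: "I \<union> {a} = shift J 1 \<union> {s}"
    unfolding Tmat_def by (auto split: if_splits)
  have "a \<notin> I" and "finite I"
    using I by (auto simp: mem_asubsets finite_mem_asubsets)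
  have "finite J" and cJ: "int (card J) = a"
    using J \<open>a \<ge> 0\<close> by (auto simp: mem_asubsets finite_mem_asubsets)
  have s: "s \<notin> shift J 1"
  proof
    assume "s \<in> shift J 1"
    then have "card (I \<union> {a}) = card J"
      using eq by (metis card_shift insert_absorb insert_is_Un sup_commute)
    then show False
      using \<open>a \<notin> I\<close> \<open>finite I\<close> I J by (simp add: mem_asubsets)
  qed
  have "s = \<Sum>I - \<Sum>J"
    by (rule removed_eq_sum_diff[OF eq s \<open>a \<notin> I\<close> \<open>finite J\<close> cJ])
  with eq s show "I \<union> {a} = shift J 1 \<union> {\<Sum>I - \<Sum>J}" and "\<Sum>I - \<Sum>J \<notin> shift J 1"
    by simp_all
qed

definition step_down :: "int \<Rightarrow> int \<Rightarrow> int set \<Rightarrow> int set" where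
  "step_down a b I = (if -b \<in> I then shift ((I \<union> {a}) - {-b}) (-1) else shift I (-1))"

definition removed_elem :: "int \<Rightarrow> int \<Rightarrow> int set \<Rightarrow> int" where
  "removed_elem a b I = (if -b \<in> I then -b else a)"

definition Tperm :: "int \<Rightarrow> int \<Rightarrow> int set \<Rightarrow> int set" where
  "Tperm a b = (\<lambda>I. if I \<in> asubsets a b then step_down a b I else I)"

lemma step_down_shape:
  assumes "a \<ge> 1" "b \<ge> 1" and I: "I \<in> asubsets a b"
  shows "I \<union> {a} = shift (step_down a b I) 1 \<union> {removed_elem a b I}"
    and "removed_elem a b I \<notin> shift (step_down a b I) 1"
  using assms by (auto simp: step_down_def removed_elem_def shift_shift mem_asubsets)

lemma step_down_in_asubsets:
  assumes "a \<ge> 1" "b \<ge> 1" and I: "I \<in> asubsets a b"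
  shows "step_down a b I \<in> asubsets a b"
proof (cases "-b \<in> I")
  case True
  have "a \<notin> I" "finite I" using I by (auto simp: mem_asubsets finite_mem_asubsets)
  then have "card ((I \<union> {a}) - {-b}) = nat a"
    using True I by (simp add: mem_asubsets)
  moreover have "(I \<union> {a}) - {-b} \<subseteq> {-b+1..a}"
    using assms by (force simp: mem_asubsets)
  then have "shift ((I \<union> {a}) - {-b}) (-1) \<subseteq> {-b..a-1}"
    by (fastforce simp: subset_iff)
  ultimately show ?thesis
    using True assms by (auto simp: step_down_def mem_asubsets)
next
  case False
  then have "I \<subseteq> {-b+1..a-1}"
    using I unfolding mem_asubsets by (smt (verit) atLeastAtMost_iff subset_iff)
  then show ?thesis
    using False I by (auto simp: step_down_def mem_asubsets)
qed

lemma step_down_inverse: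
  assumes "a \<ge> 1" "b \<ge> 1" and I: "I \<in> asubsets a b"
  shows "I = (shift (step_down a b I) 1 \<union> {if a - 1 \<in> step_down a b I then -b else a}) - {a}"
  using assms by (auto simp: step_down_def mem_asubsets shift_shift)

lemma Tperm_permutes:
  assumes "a \<ge> 1" "b \<ge> 1"
  shows "Tperm a b permutes asubsets a b"
proof (rule inj_imp_permutes)
  show "inj_on (Tperm a b) (asubsets a b)"
    by (rule inj_on_inverseI[where g = "\<lambda>J. (shift J 1 \<union> {if a - 1 \<in> J then -b else a}) - {a}"])
      (use step_down_inverse[OF assms] in \<open>simp add: Tperm_def\<close>)
qed (use step_down_in_asubsets[OF assms] in \<open>auto simp: Tperm_def finite_asubsets\<close>)

lemma Tmat_step_down:
  fixes \<omega> :: "int \<Rightarrow> 'k::field_char_0"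
  assumes "a \<ge> 1" "b \<ge> 1" and I: "I \<in> asubsets a b"
  shows "Tmat \<omega> a I (step_down a b I) =
    (if -b \<in> I then beta \<omega> (-b) else (-1) ^ nat a * beta \<omega> a)"
proof -
  have below: "{i \<in> I. i < -b} = {}" "{i \<in> I. i < a} = I" and "card I = nat a"
    using I by (auto simp: mem_asubsets)
  then have "(eps (removed_elem a b I) I :: 'k) = (if -b \<in> I then 1 else (-1) ^ nat a)"
    by (simp add: eps_def removed_elem_def below)
  then show ?thesis
    using Tmat_eq[OF step_down_shape[OF assms], of \<omega>] by (simp add: removed_elem_def split: if_splits)
qed

lemma sum_step_down:
  assumes "a \<ge> 1" "b \<ge> 1" and I: "I \<in> asubsets a b"
  shows "\<Sum>(step_down a b I) = \<Sum>I - removed_elem a b I"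
proof -
  have J: "step_down a b I \<in> asubsets a b"
    by (rule step_down_in_asubsets[OF assms])
  have "removed_elem a b I = \<Sum>I - \<Sum>(step_down a b I)"
    by (rule removed_eq_sum_diff[OF step_down_shape[OF assms]])
      (use I J \<open>a \<ge> 1\<close> in \<open>auto simp: mem_asubsets finite_mem_asubsets\<close>)
  then show ?thesis by simp
qed

lemma Tmat_nonzero_sum_drop_le:
  assumes "a \<ge> 1" "b \<ge> 1" and I: "I \<in> asubsets a b" and J: "J \<in> asubsets a b"
    and nz: "Tmat \<omega> a I J \<noteq> 0"
  shows "\<Sum>I - \<Sum>J \<le> removed_elem a b I"
    and "\<Sum>I - \<Sum>J = removed_elem a b I \<Longrightarrow> J = step_down a b I"
proof -
  define s where "s = \<Sum>I - \<Sum>J"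
  have eq: "I \<union> {a} = shift J 1 \<union> {s}" and s: "s \<notin> shift J 1"
    using Tmat_nonzero_shape[OF _ I J nz] \<open>a \<ge> 1\<close> by (simp_all add: s_def)
  then have J_eq: "J = shift ((I \<union> {a}) - {s}) (-1)"
    by (metis Diff_insert_absorb insert_is_Un shift_cancel sup_commute)
  have "a \<notin> I" "-b \<notin> shift J 1"
    using I J by (auto simp: mem_asubsets)
  have "s \<le> removed_elem a b I \<and> (s = removed_elem a b I \<longrightarrow> J = step_down a b I)"
  proof (cases "-b \<in> I")
    case True
    then have "s = -b"
      using eq \<open>-b \<notin> shift J 1\<close> by blast
    then show ?thesis
      using True J_eq by (simp add: removed_elem_def step_down_def)
  next
    case False
    have "s \<le> a"
      using eq I by (force simp: mem_asubsets)
    moreover have "s = a \<Longrightarrow> J = step_down a b I"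
      using False J_eq \<open>a \<notin> I\<close> by (simp add: step_down_def)
    ultimately show ?thesis
      using False by (simp add: removed_elem_def)
  qed
  then show "s \<le> removed_elem a b I" and "s = removed_elem a b I \<Longrightarrow> J = step_down a b I"
    by simp_all
qed

lemma permutes_pointwise_le_imp_eq:
  fixes h :: "'a \<Rightarrow> 'b::ordered_cancel_comm_monoid_add"
  assumes "finite A" and p: "p permutes A" and q: "q permutes A"
    and le: "\<And>x. x \<in> A \<Longrightarrow> h (q x) \<le> h (p x)" and "x \<in> A"
  shows "h (q x) = h (p x)"
proof -
  have "sum (h \<circ> q) A = sum (h \<circ> p) A"
    using sum.permute[OF p, of h] sum.permute[OF q, of h] by simp
  from sum_mono_inv[OF this _ \<open>x \<in> A\<close> \<open>finite A\<close>] show ?thesis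
    using le by simp
qed

lemma Tperm_unique:
  assumes "a \<ge> 1" "b \<ge> 1" and p: "p permutes asubsets a b"
    and nz: "\<forall>I \<in> asubsets a b. Tmat \<omega> a I (p I) \<noteq> 0"
  shows "p = Tperm a b"
proof
  fix I
  show "p I = Tperm a b I"
  proof (cases "I \<in> asubsets a b")
    case True
    have pI: "p I \<in> asubsets a b"
      using p True by (simp add: permutes_in_image)
    have le: "\<Sum>(Tperm a b K) \<le> \<Sum>(p K)" if "K \<in> asubsets a b" for K
      using Tmat_nonzero_sum_drop_le(1)[OF assms(1,2) that _ nz[rule_format, OF that]] that p
        sum_step_down[OF assms(1,2) that]
      by (simp add: Tperm_def permutes_in_image)
    have "\<Sum>(Tperm a b I) = \<Sum>(p I)"
      by (rule permutes_pointwise_le_imp_eq[OF finite_asubsets p Tperm_permutes[OF assms(1,2)] le True])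
    then show ?thesis
      using Tmat_nonzero_sum_drop_le(2)[OF assms(1,2) True pI nz[rule_format, OF True]]
        sum_step_down[OF assms(1,2) True] True
      by (simp add: Tperm_def)
  next
    case False
    then show ?thesis
      using p by (simp add: Tperm_def permutes_not_in)
  qed
qed

lemma card_subsets_containing:
  assumes "finite U" and "x \<notin> U"
  shows "card {K. K \<subseteq> insert x U \<and> card K = Suc k \<and> x \<in> K} = card U choose k"
proof -
  have "{K. K \<subseteq> insert x U \<and> card K = Suc k \<and> x \<in> K} = insert x ` {K. K \<subseteq> U \<and> card K = k}"
  proof (intro set_eqI iffI)
    fix K assume K: "K \<in> {K. K \<subseteq> insert x U \<and> card K = Suc k \<and> x \<in> K}"
    then have "K - {x} \<in> {K. K \<subseteq> U \<and> card K = k}"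
      using \<open>finite U\<close> by (auto simp: finite_subset[of K "insert x U"])
    with K show "K \<in> insert x ` {K. K \<subseteq> U \<and> card K = k}"
      by (metis (mono_tags, lifting) image_eqI insert_Diff mem_Collect_eq)
  qed (use assms in \<open>auto; metis card_insert_disjoint finite_subset subsetD\<close>)
  moreover have "inj_on (insert x) {K. K \<subseteq> U \<and> card K = k}"
    using \<open>x \<notin> U\<close> by (auto simp: inj_on_def)
  ultimately show ?thesis
    using n_subsets[OF \<open>finite U\<close>] by (simp add: card_image)
qed

lemma asubsets_eq_subsets_insert:
  assumes "b \<ge> 1" "a \<ge> 1"
  shows "asubsets a b = {K. K \<subseteq> insert (-b) {-b+1..a-1} \<and> card K = nat a}"
proof -
  have "{-b..a-1} = insert (-b) {-b+1..a-1}"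
    using assms by auto
  then show ?thesis
    by (simp add: asubsets_def)
qed

lemma card_asubsets_containing:
  assumes "a \<ge> 1" "b \<ge> 1"
  shows "card {I \<in> asubsets a b. -b \<in> I} = nat (a+b-1) choose nat (a-1)"
proof -
  have "nat a = Suc (nat (a-1))"
    using assms by simp
  then show ?thesis
    using card_subsets_containing[of "{-b+1..a-1}" "-b" "nat (a-1)"]
    by (simp add: asubsets_eq_subsets_insert[OF assms(2,1)] conj_assoc)
qed

lemma card_asubsets_not_containing:
  assumes "a \<ge> 1" "b \<ge> 1"
  shows "card {I \<in> asubsets a b. -b \<notin> I} = nat (a+b-1) choose nat a"
proof -
  have "{I \<in> asubsets a b. -b \<notin> I} = {K. K \<subseteq> {-b+1..a-1} \<and> card K = nat a}"
    by (auto simp: asubsets_eq_subsets_insert[OF assms(2,1)] subset_insert)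
  then show ?thesis
    using n_subsets[of "{-b+1..a-1}" "nat a"] by simp
qed

lemma det_on_unique_nonvanishing_permutation:
  assumes "finite X" and \<sigma>: "\<sigma> permutes X"
    and unique: "\<And>p. p permutes X \<Longrightarrow> \<forall>i\<in>X. M i (p i) \<noteq> 0 \<Longrightarrow> p = \<sigma>"
  shows "det_on X M = of_int (sign \<sigma>) * (\<Prod>i\<in>X. M i (\<sigma> i))"
proof -
  let ?term = "\<lambda>p. of_int (sign p) * (\<Prod>i\<in>X. M i (p i))"
  have "det_on X M = ?term \<sigma> + sum ?term ({p. p permutes X} - {\<sigma>})"
    unfolding det_on_def
    using sum.remove[OF finite_permutations[OF \<open>finite X\<close>], of \<sigma> ?term] \<sigma> by simp
  also have "sum ?term ({p. p permutes X} - {\<sigma>}) = 0"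
  proof (rule sum.neutral, rule ballI)
    fix p assume "p \<in> {p. p permutes X} - {\<sigma>}"
    then obtain i where "i \<in> X" "M i (p i) = 0"
      using unique by blast
    then have "(\<Prod>i\<in>X. M i (p i)) = 0"
      using \<open>finite X\<close> by (meson prod_zero)
    then show "?term p = 0" by simp
  qed
  finally show ?thesis by simp
qed

lemma det_on_Tmat:
  fixes \<omega> :: "int \<Rightarrow> 'k::field_char_0"
  assumes "a \<ge> 1" "b \<ge> 1"
  defines "N1 \<equiv> nat (a + b - 1) choose nat (a - 1)" and "N2 \<equiv> nat (a + b - 1) choose nat a"
  shows "det_on (asubsets a b) (Tmat \<omega> a) =
    of_int (sign (Tperm a b)) * (-1) ^ (nat a * N2) * beta \<omega> (-b) ^ N1 * beta \<omega> a ^ N2"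
proof -
  let ?A = "asubsets a b"
  have "det_on ?A (Tmat \<omega> a) = of_int (sign (Tperm a b)) * (\<Prod>I\<in>?A. Tmat \<omega> a I (Tperm a b I))"
    by (rule det_on_unique_nonvanishing_permutation[OF finite_asubsets Tperm_permutes[OF assms(1,2)]])
      (use Tperm_unique[OF assms(1,2)] in blast)
  also have "(\<Prod>I\<in>?A. Tmat \<omega> a I (Tperm a b I)) =
      (\<Prod>I\<in>?A. if -b \<in> I then beta \<omega> (-b) else (-1) ^ nat a * beta \<omega> a)"
    by (rule prod.cong) (simp_all add: Tperm_def Tmat_step_down[OF assms(1,2)])
  also have "\<dots> = beta \<omega> (-b) ^ N1 * ((-1) ^ nat a * beta \<omega> a) ^ N2"
  proof -
    have "?A \<inter> {I. -b \<in> I} = {I \<in> ?A. -b \<in> I}" "?A \<inter> - {I. -b \<in> I} = {I \<in> ?A. -b \<notin> I}"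
      by auto
    then show ?thesis
      using card_asubsets_containing[OF assms(1,2)] card_asubsets_not_containing[OF assms(1,2)]
      by (simp add: prod.If_cases[OF finite_asubsets] N1_def N2_def)
  qed
  also have "\<dots> = (-1) ^ (nat a * N2) * beta \<omega> (-b) ^ N1 * beta \<omega> a ^ N2"
    unfolding power_mult_distrib power_mult by (simp only: mult_ac)
  finally show ?thesis
    by (simp add: mult.assoc)
qed

theorem mainTheorem6:
  fixes S :: "int set" and \<omega> :: "int \<Rightarrow> 'k::field_char_0" and a b :: int
  assumes "finite S" and "S \<noteq> {}"
    and "a = Max S" and "b = - Min S" and "a \<ge> 1" and "b \<ge> 1"
    and "\<And>s. s \<notin> S \<Longrightarrow> \<omega> s = 0"
  shows "(\<exists>sg::'k. (sg = 1 \<or> sg = -1) \<and>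
           det_on (asubsets a b) (Tmat \<omega> a) =
             sg * beta \<omega> (-b) ^ (nat (a + b - 1) choose nat (a - 1))
                * beta \<omega> a ^ (nat (a + b - 1) choose nat a))
       \<and> (beta \<omega> (-b) * beta \<omega> a \<noteq> 0 \<longrightarrow>
           {\<pi>. \<pi> permutes asubsets a b \<and> (\<forall>I \<in> asubsets a b. Tmat \<omega> a I (\<pi> I) \<noteq> 0)}
           = {(\<lambda>I. if I \<in> asubsets a b then
                      (if -b \<in> I then shift ((I \<union> {a}) - {-b}) (-1) else shift I (-1))
                    else I)})"
proof -
  \<comment> \<open>Only \<open>a, b \<ge> 1\<close> matter.\<close>
  have ab: "a \<ge> 1" "b \<ge> 1" by fact+
  have Tperm_eq: "Tperm a b = (\<lambda>I. if I \<in> asubsets a b then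
      (if -b \<in> I then shift ((I \<union> {a}) - {-b}) (-1) else shift I (-1)) else I)"
    unfolding Tperm_def step_down_def ..
  let ?sg = "of_int (sign (Tperm a b)) * (-1) ^ (nat a * (nat (a + b - 1) choose nat a)) :: 'k"
  have sg: "?sg = 1 \<or> ?sg = -1"
    by (cases "even (nat a * (nat (a + b - 1) choose nat a))") (auto simp: sign_def)
  have unique: "{\<pi>. \<pi> permutes asubsets a b \<and> (\<forall>I \<in> asubsets a b. Tmat \<omega> a I (\<pi> I) \<noteq> 0)}
      = {Tperm a b}" if "beta \<omega> (-b) * beta \<omega> a \<noteq> 0"
  proof -
    have "\<forall>I \<in> asubsets a b. Tmat \<omega> a I (Tperm a b I) \<noteq> 0"
      using that by (simp add: Tperm_def Tmat_step_down[OF ab])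
    then show ?thesis
      using Tperm_unique[OF ab] Tperm_permutes[OF ab] by blast
  qed
  show ?thesis
    unfolding Tperm_eq[symmetric] using sg det_on_Tmat[OF ab, of \<omega>] unique by blast
qed

end
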